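(* Let $B,B'\in M_n(R)$ and suppose $B'$ is tropically similar to $B$, i.e. $B'=A^\nabla BA$ for some non-singular $A\in M_n(R)$. Then (a) $\det(B')\models_{gs}\det(B)$, with equality when $B'$ is non-singular; and (b) $\operatorname{tr}(B')\models_{gs}\operatorname{tr}(B)$, where $\operatorname{tr}$ denotes the sum of diagonal entries.
   Context: Supertropical semiring $R=T\cup G\cup\{-\infty\}$: $T=\mathcal G$ an ordered abelian group (tangible), $G=\{a^\nu\}$ a copy (ghost); $a+b$ is the element of larger $\nu$-value if the $\nu$-values differ and $a^\nu$ if equal; multiplication adds $\nu$-values, is ghost if a factor is ghost, $-\infty$ absorbing; $0_R=-\infty$, $1_R=0$. Ghost surpassing: $a\models_{gs}b$ iff $a=b$, or $a\in G$ and the $\nu$-value of $a$ is $\geq$ that of $b$. $\det(A)=\sum_{\sigma\in S_n}\prod_i a_{i,\sigma(i)}$; $A$ non-singular iff $\det(A)\in T$. $\operatorname{adj}(A)_{i,j}=\det(A_{j,i})$ (minor deleting row $j$, column $i$), and for non-singular $A$, $A^\nabla=\det(A)^{-1}\operatorname{adj}(A)$. *)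

theory Defs
  imports "HOL-Combinatorics.Permutations"
begin

text \<open>The supertropical semiring R = T \<union> G \<union> {-\<infinity>} over an ordered abelian group 'g.
  NInf is -\<infinity> (the zero of R), Tng a is the tangible element a, Gh a is the ghost a^\<nu>.\<close>

datatype 'g st = NInf | Tng 'g | Gh 'g

fun nuval :: "'g st \<Rightarrow> 'g" where
  "nuval (Tng a) = a" | "nuval (Gh a) = a" | "nuval NInf = undefined"

fun tangible :: "'g st \<Rightarrow> bool" where
  "tangible (Tng a) = True" | "tangible _ = False"

fun ghost :: "'g st \<Rightarrow> bool" where
  "ghost (Gh a) = True" | "ghost _ = False"

fun nu_le :: "'g::linorder st \<Rightarrow> 'g st \<Rightarrow> bool" where
  "nu_le NInf y = True"
| "nu_le x NInf = False"
| "nu_le x y = (nuval x \<le> nuval y)"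

instantiation st :: (linordered_ab_group_add) comm_semiring_1
begin

definition zero_st :: "'a st" where "zero_st = NInf"
definition one_st :: "'a st" where "one_st = Tng 0"

fun plus_st :: "'a st \<Rightarrow> 'a st \<Rightarrow> 'a st" where
  "plus_st NInf y = y"
| "plus_st x NInf = x"
| "plus_st x y = (if nuval x < nuval y then y else if nuval y < nuval x then x
                   else Gh (nuval x))"

fun times_st :: "'a st \<Rightarrow> 'a st \<Rightarrow> 'a st" where
  "times_st NInf y = NInf"
| "times_st x NInf = NInf"
| "times_st (Tng a) (Tng b) = Tng (a + b)"
| "times_st x y = Gh (nuval x + nuval y)"

instance
proof
  fix a b c :: "'a st"
  show "a + b + c = a + (b + c)"
    apply (cases a; cases b; cases c)
    apply (simp_all split: if_split)
    apply (auto simp: not_less)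
    done
  show "a + b = b + a"
    by (cases a; cases b) auto
  show "0 + a = a" by (simp add: zero_st_def)
  show "a * b * c = a * (b * c)"
    by (cases a; cases b; cases c) (auto simp: add.assoc)
  show "a * b = b * a"
    by (cases a; cases b) (auto simp: add.commute)
  show "1 * a = a" by (cases a) (auto simp: one_st_def)
  show "0 * a = 0" by (simp add: zero_st_def)
  show "a * 0 = 0" by (cases a) (auto simp: zero_st_def)
  show "(a + b) * c = a * c + b * c"
    by (cases a; cases b; cases c) (simp_all split: if_split)
  show "(0::'a st) \<noteq> 1" by (simp add: zero_st_def one_st_def)
qed
end

definition gs :: "'g::linorder st \<Rightarrow> 'g st \<Rightarrow> bool" where
  "gs a b \<longleftrightarrow> a = b \<or> (ghost a \<and> nu_le b a)"

fun tinv :: "'g::ab_group_add st \<Rightarrow> 'g st" where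
  "tinv (Tng a) = Tng (- a)" | "tinv x = undefined"

text \<open>n \<times> n matrices over R, represented as functions on indices 0..n-1.\<close>
type_synonym 'g smat = "nat \<Rightarrow> nat \<Rightarrow> 'g st"

definition tdet :: "nat \<Rightarrow> ('g::linordered_ab_group_add) smat \<Rightarrow> 'g st" where
  "tdet n A = (\<Sum>\<sigma>\<in>{p. p permutes {..<n}}. \<Prod>i<n. A i (\<sigma> i))"

definition ttrace :: "nat \<Rightarrow> ('g::linordered_ab_group_add) smat \<Rightarrow> 'g st" where
  "ttrace n A = (\<Sum>i<n. A i i)"

definition mmul :: "nat \<Rightarrow> ('g::linordered_ab_group_add) smat \<Rightarrow> 'g smat \<Rightarrow> 'g smat" where
  "mmul n A B = (\<lambda>i j. \<Sum>k<n. A i k * B k j)"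

definition minor :: "('g) smat \<Rightarrow> nat \<Rightarrow> nat \<Rightarrow> 'g smat" where
  "minor A r c = (\<lambda>k l. A (if k < r then k else Suc k) (if l < c then l else Suc l))"

definition adj :: "nat \<Rightarrow> ('g::linordered_ab_group_add) smat \<Rightarrow> 'g smat" where
  "adj n A = (\<lambda>i j. tdet (n - 1) (minor A j i))"

text \<open>A^\<nabla> = det(A)^{-1} adj(A) (for non-singular A).\<close>
definition qinv :: "nat \<Rightarrow> ('g::linordered_ab_group_add) smat \<Rightarrow> 'g smat" where
  "qinv n A = (\<lambda>i j. tinv (tdet n A) * adj n A i j)"

end

theory Submission
  imports Defs "HOL-Combinatorics.Cycles"
begin

text \<open>
  Ghost surpassing is compatible with sums and products, and determinants are multiplicative up
  to a ghost: the terms of det(XY) indexed by non-injective choices of rows of Y cancel in pairs,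
  leaving ghosts. Hence det(A' B A) \<Turnstile> det(A') det(B) det(A) for the quasi-inverse A' of A,
  and (a) reduces to det(A') det(A) \<Turnstile> 1, i.e. to det(adj A) having \<nu>-value exactly
  (n - 1) \<nu>(det A). The lower bound comes from a dominant permutation \<pi> of det A. The upper
  bound comes from assignment-problem duality: there are potentials u, v with
  \<nu>(a_ij) \<le> u_i + v_j and \<Sum>u + \<Sum>v = \<nu>(det A); they are longest-path potentials for the
  reduced costs of \<pi>, which have no positive cycles because \<pi> is optimal.

  For (b), tr(A' B A) = \<Sum>_{k,l} b_lk (A A')_kl, and A A' is a quasi-identity: its diagonal is
  det(A)^(-1) det(A) = 1 by Laplace expansion, and its off-diagonal entries are determinants with
  a repeated row, hence ghost.
\<close>

section \<open>Supertropical arithmetic\<close>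

definition ghost_or_zero :: "'g::linordered_ab_group_add st \<Rightarrow> bool" where
  "ghost_or_zero x \<longleftrightarrow> x = NInf \<or> ghost x"

lemma ghost_or_zero_zero: "ghost_or_zero 0"
  by (simp add: ghost_or_zero_def zero_st_def)

lemma ghost_or_zero_add: "ghost_or_zero x \<Longrightarrow> ghost_or_zero y \<Longrightarrow> ghost_or_zero (x + y)"
  by (cases x; cases y) (auto simp: ghost_or_zero_def)

lemma ghost_or_zero_add_self: "ghost_or_zero (x + x)"
  by (cases x) (auto simp: ghost_or_zero_def)

lemma ghost_or_zero_mult_right: "ghost_or_zero y \<Longrightarrow> ghost_or_zero (x * y)"
  by (cases x; cases y) (auto simp: ghost_or_zero_def)

lemma ghost_or_zero_sum: "(\<And>i. i \<in> S \<Longrightarrow> ghost_or_zero (f i)) \<Longrightarrow> ghost_or_zero (sum f S)"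
  by (induction S rule: infinite_finite_induct) (simp_all add: ghost_or_zero_zero ghost_or_zero_add)

lemma ghost_or_zero_sum_involution:
  assumes "finite S"
    and "\<And>s. s \<in> S \<Longrightarrow> f s \<in> S \<and> f s \<noteq> s \<and> f (f s) = s \<and> F (f s) = F s"
  shows "ghost_or_zero (sum F S)"
  using assms
proof (induction "card S" arbitrary: S rule: less_induct)
  case less
  show ?case
  proof (cases "S = {}")
    case True
    then show ?thesis by (simp add: ghost_or_zero_zero)
  next
    case False
    then obtain s where s: "s \<in> S" by blast
    have fs: "f s \<in> S" "f s \<noteq> s" "F (f s) = F s" using less.prems(2)[OF s] by auto
    let ?S' = "S - {s, f s}"
    have "f t \<in> ?S'" if t: "t \<in> ?S'" for t
    proof -
      have "f t \<in> S" "f (f t) = t" "f t \<noteq> t" using less.prems(2)[of t] t by auto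
      moreover have "f (f s) = s" using less.prems(2)[OF s] by auto
      ultimately show ?thesis using t by auto
    qed
    moreover have "card ?S' < card S" using s fs less.prems(1) by (intro psubset_card_mono) auto
    ultimately have "ghost_or_zero (sum F ?S')"
      using less.hyps less.prems by (metis DiffD1 finite_Diff)
    moreover have "sum F S = F s + F (f s) + sum F ?S'"
      using less.prems(1) s fs(1,2) by (simp add: sum.remove Diff_insert2[symmetric] insert_commute add.assoc)
    ultimately show ?thesis using fs(3) by (metis ghost_or_zero_add ghost_or_zero_add_self)
  qed
qed

lemma gs_refl: "gs a a"
  by (simp add: gs_def)

lemma gs_trans: "gs a b \<Longrightarrow> gs b c \<Longrightarrow> gs a c"
  for a b c :: "'g::linordered_ab_group_add st"
  by (cases a; cases b; cases c) (auto simp: gs_def)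

lemma gs_mult: "gs a b \<Longrightarrow> gs c d \<Longrightarrow> gs (a * c) (b * d)"
  for a b c d :: "'g::linordered_ab_group_add st"
  by (cases a; cases b; cases c; cases d) (auto simp: gs_def not_less add_mono)

lemma gs_add_ghost_or_zero: "ghost_or_zero g \<Longrightarrow> gs (a + g) a"
  by (cases a; cases g) (auto simp: gs_def ghost_or_zero_def)

lemma gs_tangible_eq: "gs a b \<Longrightarrow> tangible a \<Longrightarrow> a = b"
  by (cases a) (auto simp: gs_def)

lemma Tng_power: "(Tng a :: 'g::linordered_ab_group_add st) ^ k = Tng (\<Sum>j<k. a)"
  by (induction k) (simp_all add: one_st_def add.commute)

text \<open>Bounds on the \<nu>-value, with \<nu>(-\<infinity>) = -\<infinity>.\<close>

definition nu_at_most :: "'g::linordered_ab_group_add st \<Rightarrow> 'g \<Rightarrow> bool" where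
  "nu_at_most x t \<longleftrightarrow> x = NInf \<or> nuval x \<le> t"

definition nu_at_least :: "'g::linordered_ab_group_add st \<Rightarrow> 'g \<Rightarrow> bool" where
  "nu_at_least x t \<longleftrightarrow> x \<noteq> NInf \<and> t \<le> nuval x"

lemma gs_Tng_if_nu_at_most_at_least: "nu_at_most x t \<Longrightarrow> nu_at_least x t \<Longrightarrow> gs x (Tng t)"
  by (cases x) (auto simp: nu_at_most_def nu_at_least_def gs_def)

lemma nu_at_most_mult: "nu_at_most x s \<Longrightarrow> nu_at_most y t \<Longrightarrow> nu_at_most (x * y) (s + t)"
  by (cases x; cases y) (auto simp: nu_at_most_def add_mono)

lemma nu_at_least_mult: "nu_at_least x s \<Longrightarrow> nu_at_least y t \<Longrightarrow> nu_at_least (x * y) (s + t)"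
  by (cases x; cases y) (auto simp: nu_at_least_def add_mono)

lemma nu_at_most_add: "nu_at_most x t \<Longrightarrow> nu_at_most y t \<Longrightarrow> nu_at_most (x + y) t"
  by (cases x; cases y) (auto simp: nu_at_most_def)

lemma nu_at_least_add: "nu_at_least x t \<Longrightarrow> nu_at_least (x + y) t"
  by (cases x; cases y) (auto simp: nu_at_least_def)

lemma nu_at_most_prod:
  "(\<And>i. i \<in> I \<Longrightarrow> nu_at_most (f i) (g i)) \<Longrightarrow> nu_at_most (prod f I) (sum g I)"
  by (induction I rule: infinite_finite_induct)
    (simp_all add: nu_at_most_def one_st_def, metis nu_at_most_def nu_at_most_mult)

lemma nu_at_least_prod:
  "(\<And>i. i \<in> I \<Longrightarrow> nu_at_least (f i) (g i)) \<Longrightarrow> nu_at_least (prod f I) (sum g I)"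
  by (induction I rule: infinite_finite_induct)
    (simp_all add: nu_at_least_def one_st_def, metis nu_at_least_def nu_at_least_mult)

lemma nu_at_most_sum: "(\<And>i. i \<in> I \<Longrightarrow> nu_at_most (f i) t) \<Longrightarrow> nu_at_most (sum f I) t"
  by (induction I rule: infinite_finite_induct)
    (simp_all add: nu_at_most_def zero_st_def, metis nu_at_most_def nu_at_most_add)

lemma nu_at_least_sum: "finite I \<Longrightarrow> i \<in> I \<Longrightarrow> nu_at_least (f i) t \<Longrightarrow> nu_at_least (sum f I) t"
  by (simp add: sum.remove nu_at_least_add)

lemma nuval_prod:
  "(\<And>i. i \<in> I \<Longrightarrow> f i \<noteq> NInf) \<Longrightarrow> prod f I \<noteq> NInf \<and> nuval (prod f I) = (\<Sum>i\<in>I. nuval (f i))"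
  for f :: "'a \<Rightarrow> 'g::linordered_ab_group_add st"
  using nu_at_most_prod[of I f "\<lambda>i. nuval (f i)"] nu_at_least_prod[of I f "\<lambda>i. nuval (f i)"]
  by (auto simp: nu_at_most_def nu_at_least_def)

lemma nu_at_most_summand:
  "finite I \<Longrightarrow> i \<in> I \<Longrightarrow> sum f I \<noteq> NInf \<Longrightarrow> nu_at_most (f i) (nuval (sum f I))"
  for f :: "'a \<Rightarrow> 'g::linordered_ab_group_add st"
  by (cases "f i"; cases "sum f (I - {i})") (auto simp: sum.remove nu_at_most_def)

lemma ex_dominant_summand:
  "finite I \<Longrightarrow> sum f I \<noteq> NInf \<Longrightarrow> \<exists>i\<in>I. f i \<noteq> NInf \<and> nuval (f i) = nuval (sum f I)"
  for f :: "'a \<Rightarrow> 'g::linordered_ab_group_add st"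
proof (induction I rule: finite_induct)
  case empty
  then show ?case by (simp add: zero_st_def)
next
  case (insert x F)
  show ?case
  proof (cases "sum f F = NInf")
    case True
    then show ?thesis using insert by (cases "f x") auto
  next
    case False
    then obtain j where j: "j \<in> F" "f j \<noteq> NInf" "nuval (f j) = nuval (sum f F)"
      using insert.IH by blast
    have "nuval (f x + sum f F) = (if f x \<noteq> NInf \<and> nuval (sum f F) \<le> nuval (f x) then nuval (f x)
        else nuval (sum f F))"
      using False by (cases "f x"; cases "sum f F") auto
    then show ?thesis using insert(1,2) j by (auto split: if_splits)
  qed
qed

section \<open>Potentials for the assignment problem\<close>

fun path_weight :: "('a \<Rightarrow> 'a \<Rightarrow> 'g::comm_monoid_add) \<Rightarrow> 'a list \<Rightarrow> 'g" where
  "path_weight r (x # y # zs) = r x y + path_weight r (y # zs)"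
| "path_weight r _ = 0"

lemma path_weight_snoc: "xs \<noteq> [] \<Longrightarrow> path_weight r (xs @ [y]) = path_weight r xs + r (last xs) y"
  by (induction r xs rule: path_weight.induct) (auto simp: add_ac)

lemma path_weight_append: "path_weight r (xs @ y # zs) = path_weight r (xs @ [y]) + path_weight r (y # zs)"
  by (induction r xs rule: path_weight.induct) (auto simp: add_ac)

lemma path_weight_eq_sum_list_zip:
  "xs \<noteq> [] \<Longrightarrow> path_weight r (xs @ [y]) = (\<Sum>(a, b)\<leftarrow>zip xs (tl xs @ [y]). r a b)"
  by (induction r xs rule: path_weight.induct) auto

lemma closed_path_weight_eq_sum_cycle:
  assumes "distinct xs" "xs \<noteq> []"
  shows "path_weight r xs + r (last xs) (hd xs) = (\<Sum>a\<in>set xs. r a (cycle_of_list xs a))"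
proof -
  have "(\<Sum>a\<in>set xs. r a (cycle_of_list xs a)) = (\<Sum>(a, b)\<leftarrow>zip xs (map (cycle_of_list xs) xs). r a b)"
    using assms(1) by (simp add: sum_list_distinct_conv_sum_set[symmetric] zip_map2 zip_same_conv_map comp_def)
  also have "map (cycle_of_list xs) xs = tl xs @ [hd xs]"
    using cyclic_rotation[OF assms(1), of 1] assms(2) by (simp add: rotate1_hd_tl)
  finally show ?thesis
    by (simp add: path_weight_eq_sum_list_zip[OF assms(2)] path_weight_snoc[OF assms(2), symmetric])
qed

locale nonpositive_cycles =
  fixes r :: "nat \<Rightarrow> nat \<Rightarrow> 'g::linordered_ab_group_add" and n :: nat
  assumes closed_path_weight_nonpos:
    "distinct xs \<Longrightarrow> xs \<noteq> [] \<Longrightarrow> set xs \<subseteq> {..<n} \<Longrightarrow> path_weight r xs + r (last xs) (hd xs) \<le> 0"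
begin

definition simple_paths_to :: "nat \<Rightarrow> nat list set" where
  "simple_paths_to k = {xs. distinct xs \<and> set xs \<subseteq> {..<n} \<and> xs \<noteq> [] \<and> last xs = k}"

definition potential :: "nat \<Rightarrow> 'g" where
  "potential k = Max (path_weight r ` simple_paths_to k)"

lemma finite_simple_paths_to: "finite (simple_paths_to k)"
  by (rule finite_subset[OF _ finite_subset_distinct[of "{..<n}"]]) (auto simp: simple_paths_to_def)

lemma path_weight_le_potential: "xs \<in> simple_paths_to k \<Longrightarrow> path_weight r xs \<le> potential k"
  unfolding potential_def using finite_simple_paths_to by (intro Max_ge) auto

lemma potential_attained: "k < n \<Longrightarrow> \<exists>xs\<in>simple_paths_to k. path_weight r xs = potential k"
proof -
  assume "k < n"
  then have "[k] \<in> simple_paths_to k" by (simp add: simple_paths_to_def)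
  then show ?thesis
    unfolding potential_def using finite_simple_paths_to Max_in[of "path_weight r ` simple_paths_to k"] by fastforce
qed

text \<open>A heaviest simple path to i either extends to k, or already passes through k, in which
  case its part after k closes up into a cycle through the edge (i, k).\<close>
lemma potential_edge:
  assumes "i < n" "k < n" shows "potential i + r i k \<le> potential k"
proof -
  obtain xs where xs: "xs \<in> simple_paths_to i" "path_weight r xs = potential i"
    using potential_attained[OF assms(1)] by blast
  have path: "distinct xs" "set xs \<subseteq> {..<n}" "xs \<noteq> []" "last xs = i"
    using xs(1) unfolding simple_paths_to_def by auto
  show ?thesis
  proof (cases "k \<in> set xs")
    case False
    then have "xs @ [k] \<in> simple_paths_to k"
      using path assms(2) by (simp add: simple_paths_to_def)
    then show ?thesis
      using path_weight_le_potential path_weight_snoc[OF path(3)] xs(2) path(4) by metis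
  next
    case True
    then obtain ys zs where split: "xs = ys @ k # zs" by (meson split_list)
    have "ys @ [k] \<in> simple_paths_to k" using path split by (auto simp: simple_paths_to_def)
    then have "path_weight r (ys @ [k]) \<le> potential k" by (rule path_weight_le_potential)
    moreover have "path_weight r (k # zs) + r i k \<le> 0"
      using closed_path_weight_nonpos[of "k # zs"] path split by (simp add: last_append)
    moreover have "potential i = path_weight r (ys @ [k]) + path_weight r (k # zs)"
      using xs(2) split path_weight_append[of r ys k zs] by simp
    ultimately show ?thesis
      by (simp add: add.assoc) (metis add_le_same_cancel1 add_left_mono order_trans)
  qed
qed

end

lemma reduced_cycle_weight_nonpos:
  fixes w :: "nat \<Rightarrow> nat \<Rightarrow> 'g::linordered_ab_group_add"
  assumes \<pi>: "\<pi> permutes {..<n}"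
    and max: "\<And>\<sigma>. \<sigma> permutes {..<n} \<Longrightarrow> (\<Sum>i<n. w i (\<sigma> i)) \<le> (\<Sum>i<n. w i (\<pi> i))"
    and xs: "distinct xs" "set xs \<subseteq> {..<n}"
  shows "(\<Sum>i\<in>set xs. w i (\<pi> (cycle_of_list xs i)) - w (cycle_of_list xs i) (\<pi> (cycle_of_list xs i))) \<le> 0"
proof -
  let ?c = "cycle_of_list xs"
  have c: "?c permutes set xs" by (rule cycle_permutes)
  have "(\<pi> \<circ> ?c) permutes {..<n}" using permutes_compose[OF permutes_subset[OF c xs(2)] \<pi>] .
  from max[OF this] have "(\<Sum>i<n. w i (\<pi> (?c i))) \<le> (\<Sum>i<n. w i (\<pi> i))" by simp
  moreover have "(\<Sum>i<n. f i) = (\<Sum>i\<in>set xs. f i) + (\<Sum>i\<in>{..<n} - set xs. f i)" for f :: "nat \<Rightarrow> 'g"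
    using xs(2) by (metis add.commute finite_lessThan sum.subset_diff)
  moreover have "(\<Sum>i\<in>{..<n} - set xs. w i (\<pi> (?c i))) = (\<Sum>i\<in>{..<n} - set xs. w i (\<pi> i))"
    by (rule sum.cong) (auto simp: permutes_not_in[OF c])
  ultimately have "(\<Sum>i\<in>set xs. w i (\<pi> (?c i))) \<le> (\<Sum>i\<in>set xs. w i (\<pi> i))"
    by (metis add_le_cancel_right)
  moreover have "(\<Sum>i\<in>set xs. w (?c i) (\<pi> (?c i))) = (\<Sum>i\<in>set xs. w i (\<pi> i))"
    using sum.reindex_bij_betw[OF permutes_imp_bij[OF c], of "\<lambda>i. w i (\<pi> i)"] by simp
  ultimately show ?thesis by (simp add: sum_subtractf)
qed

lemma assignment_potentials:
  fixes w :: "nat \<Rightarrow> nat \<Rightarrow> 'g::linordered_ab_group_add"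
  assumes \<pi>: "\<pi> permutes {..<n}"
    and max: "\<And>\<sigma>. \<sigma> permutes {..<n} \<Longrightarrow> (\<Sum>i<n. w i (\<sigma> i)) \<le> (\<Sum>i<n. w i (\<pi> i))"
  obtains u v where "\<And>i j. i < n \<Longrightarrow> j < n \<Longrightarrow> w i j \<le> u i + v j"
    and "\<And>i. i < n \<Longrightarrow> w i (\<pi> i) = u i + v (\<pi> i)"
proof -
  \<comment> \<open>Reduced costs: a closed path of r is the gain of rerouting \<pi> along a cycle.\<close>
  define r where "r i k = w i (\<pi> k) - w k (\<pi> k)" for i k
  interpret nonpositive_cycles r n
  proof
    fix xs :: "nat list" assume xs: "distinct xs" "xs \<noteq> []" "set xs \<subseteq> {..<n}"
    show "path_weight r xs + r (last xs) (hd xs) \<le> 0"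
      unfolding closed_path_weight_eq_sum_cycle[OF xs(1,2)]
      using reduced_cycle_weight_nonpos[where w = w, OF \<pi> max xs(1,3)] by (simp add: r_def)
  qed
  define u where "u i = - potential i" for i
  define v where "v j = potential (inv \<pi> j) + w (inv \<pi> j) j" for j
  show ?thesis
  proof
    fix i j assume ij: "i < n" "j < n"
    have k: "inv \<pi> j < n" "\<pi> (inv \<pi> j) = j"
      using ij permutes_inverses(1)[OF \<pi>] permutes_in_image[OF permutes_inv[OF \<pi>], of j] by auto
    show "w i j \<le> u i + v j"
      using potential_edge[OF ij(1) k(1)] k(2) by (simp add: r_def u_def v_def algebra_simps)
  next
    fix i show "w i (\<pi> i) = u i + v (\<pi> i)"
      by (simp add: u_def v_def permutes_inverses[OF \<pi>])
  qed
qed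

section \<open>Determinants\<close>

lemma tdet_0 [simp]: "tdet 0 M = 1"
  by (simp add: tdet_def)

lemma permutes_lessThan_less: "\<sigma> permutes {..<n} \<Longrightarrow> i < n \<Longrightarrow> \<sigma> i < n"
  using permutes_in_image[of \<sigma> "{..<n}" i] by simp

lemma tdet_cong: "(\<And>i j. i < n \<Longrightarrow> j < n \<Longrightarrow> M i j = N i j) \<Longrightarrow> tdet n M = tdet n N"
  unfolding tdet_def
  by (rule sum.cong[OF refl], rule prod.cong[OF refl]) (auto simp: permutes_lessThan_less)

lemma tdet_smult: "tdet n (\<lambda>i j. c * M i j) = c ^ n * tdet n M"
  unfolding tdet_def by (simp add: prod.distrib sum_distrib_left)

lemma tdet_permute_rows:
  assumes \<rho>: "\<rho> permutes {..<n}"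
  shows "tdet n (\<lambda>i. Y (\<rho> i)) = tdet n Y"
proof -
  have "(\<Prod>i<n. Y (\<rho> i) (\<sigma> i)) = (\<Prod>i<n. Y i ((\<sigma> \<circ> inv \<rho>) i))" for \<sigma>
    using prod.reindex_bij_betw[OF permutes_imp_bij[OF \<rho>], of "\<lambda>i. Y i (\<sigma> (inv \<rho> i))"]
    by (simp add: permutes_inverses[OF \<rho>])
  then show ?thesis
    unfolding tdet_def
    using sum_permutations_compose_right[OF permutes_inv[OF \<rho>], of "\<lambda>\<sigma>. \<Prod>i<n. Y i (\<sigma> i)"]
    by simp
qed

text \<open>Composing with the transposition of the two equal rows pairs up the terms.\<close>
lemma tdet_repeated_row_ghost:
  assumes kl: "k < n" "l < n" "k \<noteq> l" and eq: "\<And>j. j < n \<Longrightarrow> M k j = M l j"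
  shows "ghost_or_zero (tdet n M)"
  unfolding tdet_def
proof (rule ghost_or_zero_sum_involution[where f = "\<lambda>\<sigma>. \<sigma> \<circ> transpose k l"])
  show "finite {\<sigma>. \<sigma> permutes {..<n}}" by (simp add: finite_permutations)
next
  fix \<sigma> assume "\<sigma> \<in> {\<sigma>. \<sigma> permutes {..<n}}"
  then have \<sigma>: "\<sigma> permutes {..<n}" by simp
  let ?t = "transpose k l"
  have t: "?t permutes {..<n}" using kl by (simp add: permutes_swap_id)
  have "\<sigma> \<circ> ?t \<noteq> \<sigma>"
    using permutes_inj[OF \<sigma>] kl(3) by (metis comp_apply transpose_apply_first injD)
  moreover have "(\<Prod>i<n. M i ((\<sigma> \<circ> ?t) i)) = (\<Prod>i<n. M (?t i) (\<sigma> i))"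
    using prod.reindex_bij_betw[OF permutes_imp_bij[OF t], of "\<lambda>i. M (?t i) (\<sigma> i)"]
    by (simp add: transpose_transpose)
  moreover have "\<dots> = (\<Prod>i<n. M i (\<sigma> i))"
    using eq by (intro prod.cong) (auto simp: transpose_def permutes_lessThan_less[OF \<sigma>])
  ultimately show "\<sigma> \<circ> ?t \<in> {\<sigma>. \<sigma> permutes {..<n}} \<and> \<sigma> \<circ> ?t \<noteq> \<sigma> \<and> \<sigma> \<circ> ?t \<circ> ?t = \<sigma> \<and>
      (\<Prod>i<n. M i ((\<sigma> \<circ> ?t) i)) = (\<Prod>i<n. M i (\<sigma> i))"
    using permutes_compose[OF t \<sigma>] by (simp add: comp_assoc)
qed

definition extend_id :: "nat \<Rightarrow> (nat \<Rightarrow> nat) \<Rightarrow> nat \<Rightarrow> nat" where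
  "extend_id n g i = (if i < n then g i else i)"

lemma extend_id_permutes:
  assumes "g \<in> {..<n} \<rightarrow>\<^sub>E {..<n}" "inj_on g {..<n}"
  shows "extend_id n g permutes {..<n}"
proof (rule inj_imp_permutes)
  show "inj_on (extend_id n g) {..<n}" using assms(2) unfolding extend_id_def inj_on_def by auto
qed (use assms(1) in \<open>auto simp: extend_id_def\<close>)

lemma tdet_rows_inj:
  assumes "g \<in> {..<n} \<rightarrow>\<^sub>E {..<n}" "inj_on g {..<n}"
  shows "tdet n (\<lambda>i. Y (g i)) = tdet n Y"
proof -
  have "tdet n (\<lambda>i. Y (g i)) = tdet n (\<lambda>i. Y (extend_id n g i))"
    by (rule tdet_cong) (simp add: extend_id_def)
  also have "\<dots> = tdet n Y" using tdet_permute_rows[OF extend_id_permutes[OF assms]] .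
  finally show ?thesis .
qed

lemma tdet_eq_sum_inj:
  "tdet n X = (\<Sum>g\<in>{g\<in>{..<n} \<rightarrow>\<^sub>E {..<n}. inj_on g {..<n}}. \<Prod>i<n. X i (g i))"
  unfolding tdet_def
proof (rule sym, rule sum.reindex_bij_witness[where j = "extend_id n" and i = "\<lambda>\<sigma>. restrict \<sigma> {..<n}"])
  fix g assume g: "g \<in> {g\<in>{..<n} \<rightarrow>\<^sub>E {..<n}. inj_on g {..<n}}"
  show "restrict (extend_id n g) {..<n} = g"
    using g by (auto simp: extend_id_def restrict_def PiE_def extensional_def)
  show "extend_id n g \<in> {\<sigma>. \<sigma> permutes {..<n}}" using extend_id_permutes g by auto
  show "(\<Prod>i<n. X i (extend_id n g i)) = (\<Prod>i<n. X i (g i))" by (simp add: extend_id_def)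
next
  fix \<sigma> assume "\<sigma> \<in> {\<sigma>. \<sigma> permutes {..<n}}"
  then have \<sigma>: "\<sigma> permutes {..<n}" by simp
  show "extend_id n (restrict \<sigma> {..<n}) = \<sigma>"
    using permutes_not_in[OF \<sigma>] by (auto simp: extend_id_def)
  show "restrict \<sigma> {..<n} \<in> {g\<in>{..<n} \<rightarrow>\<^sub>E {..<n}. inj_on g {..<n}}"
    using permutes_lessThan_less[OF \<sigma>] permutes_inj[OF \<sigma>] by (auto simp: PiE_def inj_on_def inj_def)
qed

lemma tdet_mmul_gs: "gs (tdet n (mmul n X Y)) (tdet n X * tdet n Y)"
proof -
  let ?F = "{..<n} \<rightarrow>\<^sub>E {..<n::nat}"
  let ?I = "{g\<in>?F. inj_on g {..<n}}"
  let ?N = "{g\<in>?F. \<not> inj_on g {..<n}}"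
  let ?T = "\<lambda>g. (\<Prod>i<n. X i (g i)) * tdet n (\<lambda>i. Y (g i))"
  have "tdet n (mmul n X Y) = (\<Sum>\<sigma>\<in>{\<sigma>. \<sigma> permutes {..<n}}. \<Sum>g\<in>?F. \<Prod>i<n. X i (g i) * Y (g i) (\<sigma> i))"
    unfolding tdet_def mmul_def by (simp add: prod_sum_PiE)
  also have "\<dots> = (\<Sum>g\<in>?F. ?T g)"
    unfolding tdet_def by (subst sum.swap) (simp add: prod.distrib sum_distrib_left)
  also have "\<dots> = (\<Sum>g\<in>?I. ?T g) + (\<Sum>g\<in>?N. ?T g)"
    by (subst sum.union_disjoint[symmetric]) (auto simp: finite_PiE intro: sum.cong)
  also have "(\<Sum>g\<in>?I. ?T g) = tdet n X * tdet n Y"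
    by (simp add: tdet_rows_inj tdet_eq_sum_inj[of n X] sum_distrib_right)
  finally have split: "tdet n (mmul n X Y) = tdet n X * tdet n Y + (\<Sum>g\<in>?N. ?T g)" .
  have "ghost_or_zero (?T g)" if g: "g \<in> ?N" for g
  proof -
    obtain k l where "k < n" "l < n" "k \<noteq> l" "g k = g l" using g unfolding inj_on_def by auto
    then show ?thesis
      using tdet_repeated_row_ghost[of k n l "\<lambda>i. Y (g i)"] by (simp add: ghost_or_zero_mult_right)
  qed
  then show ?thesis unfolding split by (intro gs_add_ghost_or_zero ghost_or_zero_sum) simp
qed

definition skip :: "nat \<Rightarrow> nat \<Rightarrow> nat" where "skip r k = (if k < r then k else Suc k)"
definition unskip :: "nat \<Rightarrow> nat \<Rightarrow> nat" where "unskip r i = (if i < r then i else i - 1)"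

lemma unskip_skip [simp]: "unskip r (skip r k) = k" by (simp add: skip_def unskip_def)
lemma skip_unskip [simp]: "i \<noteq> r \<Longrightarrow> skip r (unskip r i) = i" by (auto simp: skip_def unskip_def)
lemma skip_neq [simp]: "skip r k \<noteq> r" by (simp add: skip_def)

lemma bij_betw_skip: "r < Suc m \<Longrightarrow> bij_betw (skip r) {..<m} ({..<Suc m} - {r})"
  by (rule bij_betw_byWitness[where f' = "unskip r"]) (auto simp: skip_def unskip_def)

lemma bij_betw_unskip: "r < Suc m \<Longrightarrow> bij_betw (unskip r) ({..<Suc m} - {r}) {..<m}"
  by (rule bij_betw_byWitness[where f' = "skip r"]) (auto simp: skip_def unskip_def)

lemma minor_skip: "minor M r c k l = M (skip r k) (skip c l)" by (simp add: minor_def skip_def)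

lemma permutes_delete:
  assumes \<sigma>: "\<sigma> permutes {..<Suc m}" "\<sigma> r = c" and rc: "r < Suc m" "c < Suc m"
  shows "unskip c \<circ> \<sigma> \<circ> skip r permutes {..<m}"
proof (rule bij_imp_permutes)
  have "bij_betw \<sigma> ({..<Suc m} - {r}) ({..<Suc m} - {c})"
    using \<sigma> rc by (intro bij_betw_DiffI) (auto simp: permutes_imp_bij)
  then show "bij_betw (unskip c \<circ> \<sigma> \<circ> skip r) {..<m} {..<m}"
    using rc by (meson bij_betw_skip bij_betw_trans bij_betw_unskip)
  show "x \<notin> {..<m} \<Longrightarrow> (unskip c \<circ> \<sigma> \<circ> skip r) x = x" for x
    using rc permutes_not_in[OF \<sigma>(1)] by (auto simp: skip_def unskip_def)
qed

lemma permutes_insert: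
  assumes \<rho>: "\<rho> permutes {..<m}" and rc: "r < Suc m" "c < Suc m"
  shows "(skip c \<circ> \<rho> \<circ> unskip r)(r := c) permutes {..<Suc m}"
proof (rule bij_imp_permutes)
  have "bij_betw (skip c \<circ> \<rho> \<circ> unskip r) ({..<Suc m} - {r}) ({..<Suc m} - {c})"
    using rc permutes_imp_bij[OF \<rho>] by (meson bij_betw_skip bij_betw_trans bij_betw_unskip)
  then have "bij_betw ((skip c \<circ> \<rho> \<circ> unskip r)(r := c)) ({..<Suc m} - {r}) ({..<Suc m} - {c})"
    by (rule bij_betw_cong[THEN iffD1, rotated]) auto
  then have "bij_betw ((skip c \<circ> \<rho> \<circ> unskip r)(r := c)) ({r} \<union> ({..<Suc m} - {r})) ({c} \<union> ({..<Suc m} - {c}))"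
    by (intro bij_betw_combine) auto
  then show "bij_betw ((skip c \<circ> \<rho> \<circ> unskip r)(r := c)) {..<Suc m} {..<Suc m}"
    using rc by (simp add: insert_absorb)
  show "x \<notin> {..<Suc m} \<Longrightarrow> ((skip c \<circ> \<rho> \<circ> unskip r)(r := c)) x = x" for x
    using rc permutes_not_in[OF \<rho>] by (auto simp: skip_def unskip_def)
qed

lemma tdet_minor:
  assumes rc: "r < Suc m" "c < Suc m"
  shows "tdet m (minor M r c) =
    (\<Sum>\<sigma>\<in>{\<sigma>. \<sigma> permutes {..<Suc m} \<and> \<sigma> r = c}. \<Prod>i\<in>{..<Suc m} - {r}. M i (\<sigma> i))"
  unfolding tdet_def
proof (rule sym, rule sum.reindex_bij_witness[where j = "\<lambda>\<sigma>. unskip c \<circ> \<sigma> \<circ> skip r"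
      and i = "\<lambda>\<rho>. (skip c \<circ> \<rho> \<circ> unskip r)(r := c)"])
  fix \<sigma> assume "\<sigma> \<in> {\<sigma>. \<sigma> permutes {..<Suc m} \<and> \<sigma> r = c}"
  then have \<sigma>: "\<sigma> permutes {..<Suc m}" "\<sigma> r = c" by auto
  have \<sigma>_neq: "\<sigma> i \<noteq> c" if "i \<noteq> r" for i
    using \<sigma> that by (metis permutes_inj injD)
  show "((skip c \<circ> (unskip c \<circ> \<sigma> \<circ> skip r) \<circ> unskip r)(r := c)) = \<sigma>"
    using \<sigma>(2) \<sigma>_neq by (auto simp: fun_eq_iff)
  show "unskip c \<circ> \<sigma> \<circ> skip r \<in> {\<rho>. \<rho> permutes {..<m}}"
    using permutes_delete[OF \<sigma> rc] by simp
  have "(\<Prod>k<m. minor M r c k ((unskip c \<circ> \<sigma> \<circ> skip r) k)) = (\<Prod>k<m. M (skip r k) (\<sigma> (skip r k)))"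
    by (simp add: minor_skip \<sigma>_neq)
  also have "\<dots> = (\<Prod>i\<in>{..<Suc m} - {r}. M i (\<sigma> i))"
    using prod.reindex_bij_betw[OF bij_betw_skip[OF rc(1)]] .
  finally show "(\<Prod>k<m. minor M r c k ((unskip c \<circ> \<sigma> \<circ> skip r) k)) = (\<Prod>i\<in>{..<Suc m} - {r}. M i (\<sigma> i))" .
next
  fix \<rho> assume "\<rho> \<in> {\<rho>. \<rho> permutes {..<m}}"
  then have \<rho>: "\<rho> permutes {..<m}" by simp
  show "unskip c \<circ> (skip c \<circ> \<rho> \<circ> unskip r)(r := c) \<circ> skip r = \<rho>"
    by (simp add: fun_eq_iff)
  show "(skip c \<circ> \<rho> \<circ> unskip r)(r := c) \<in> {\<sigma>. \<sigma> permutes {..<Suc m} \<and> \<sigma> r = c}"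
    using permutes_insert[OF \<rho> rc] by simp
qed

lemma tdet_expand_row:
  assumes r: "r < Suc m"
  shows "tdet (Suc m) M = (\<Sum>c<Suc m. M r c * tdet m (minor M r c))"
proof -
  let ?S = "\<lambda>c. {\<sigma>. \<sigma> permutes {..<Suc m} \<and> \<sigma> r = c}"
  have "(\<Sum>c<Suc m. M r c * tdet m (minor M r c))
      = (\<Sum>c<Suc m. \<Sum>\<sigma>\<in>?S c. M r c * (\<Prod>i\<in>{..<Suc m} - {r}. M i (\<sigma> i)))"
    by (rule sum.cong) (simp_all add: tdet_minor[OF r] sum_distrib_left)
  also have "\<dots> = (\<Sum>c<Suc m. \<Sum>\<sigma>\<in>?S c. \<Prod>i<Suc m. M i (\<sigma> i))"
  proof (intro sum.cong refl)
    fix c \<sigma> assume "\<sigma> \<in> ?S c"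
    then show "M r c * (\<Prod>i\<in>{..<Suc m} - {r}. M i (\<sigma> i)) = (\<Prod>i<Suc m. M i (\<sigma> i))"
      using prod.remove[of "{..<Suc m}" r "\<lambda>i. M i (\<sigma> i)"] r by simp
  qed
  also have "\<dots> = (\<Sum>\<sigma>\<in>(\<Union>c<Suc m. ?S c). \<Prod>i<Suc m. M i (\<sigma> i))"
    by (rule sum.UNION_disjoint[symmetric]) (auto simp: finite_permutations)
  also have "(\<Union>c<Suc m. ?S c) = {\<sigma>. \<sigma> permutes {..<Suc m}}"
    using permutes_lessThan_less r by auto
  finally show ?thesis unfolding tdet_def ..
qed

lemma tdet_expand_row_replaced:
  assumes "l < Suc m"
  shows "(\<Sum>c<Suc m. A k c * tdet m (minor A l c)) = tdet (Suc m) (A(l := A k))"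
proof -
  have "minor (A(l := A k)) l c = minor A l c" for c
    by (auto simp: minor_def fun_eq_iff)
  then show ?thesis using tdet_expand_row[OF assms, of "A(l := A k)"] by simp
qed

section \<open>The quasi-inverse\<close>

lemma tdet_dominant_perm:
  assumes "tdet n A = Tng \<delta>"
  obtains \<pi> where "\<pi> permutes {..<n}" "\<And>i. i < n \<Longrightarrow> A i (\<pi> i) \<noteq> NInf"
    and "(\<Sum>i<n. nuval (A i (\<pi> i))) = \<delta>"
proof -
  have "\<exists>\<pi>\<in>{\<sigma>. \<sigma> permutes {..<n}}. (\<Prod>i<n. A i (\<pi> i)) \<noteq> NInf
      \<and> nuval (\<Prod>i<n. A i (\<pi> i)) = nuval (tdet n A)"
    unfolding tdet_def using assms
    by (intro ex_dominant_summand) (simp_all add: finite_permutations tdet_def)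
  then obtain \<pi> where \<pi>: "\<pi> permutes {..<n}" "(\<Prod>i<n. A i (\<pi> i)) \<noteq> NInf"
    "nuval (\<Prod>i<n. A i (\<pi> i)) = \<delta>"
    using assms by auto
  moreover have "A i (\<pi> i) \<noteq> NInf" if "i < n" for i
    using \<pi>(2) that prod_zero[of "{..<n}" "\<lambda>i. A i (\<pi> i)"] by (auto simp: zero_st_def)
  ultimately show ?thesis using that nuval_prod[of "{..<n}" "\<lambda>i. A i (\<pi> i)"] by auto
qed

text \<open>A finite weight matrix for the assignment problem of A: entries -\<infinity> get a weight so low
  that no permutation through them reaches \<nu>(det A).\<close>
lemma tdet_finite_weights:
  assumes "tdet n A = Tng \<delta>"
  obtains w where "\<And>i j. A i j \<noteq> NInf \<Longrightarrow> w i j = nuval (A i j)"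
    and "\<And>\<sigma>. \<sigma> permutes {..<n} \<Longrightarrow> (\<Sum>i<n. w i (\<sigma> i)) \<le> \<delta>"
proof -
  define M where "M = Max (insert \<delta> ((\<lambda>(i, j). nuval (A i j)) ` ({..<n} \<times> {..<n})))"
  define L where "L = min M (\<delta> - (\<Sum>i<n. M) + M)"
  define w where "w i j = (if A i j = NInf then L else nuval (A i j))" for i j
  have "nuval (A i j) \<le> M" if "i < n" "j < n" for i j
    unfolding M_def using that by (intro Max_ge) auto
  then have w_le: "w i j \<le> M" if "i < n" "j < n" for i j
    using that by (simp add: w_def L_def)
  have "(\<Sum>i<n. w i (\<sigma> i)) \<le> \<delta>" if \<sigma>: "\<sigma> permutes {..<n}" for \<sigma>
  proof (cases "\<forall>i<n. A i (\<sigma> i) \<noteq> NInf")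
    case True
    moreover have "nu_at_most (\<Prod>i<n. A i (\<sigma> i)) \<delta>"
      using nu_at_most_summand[of "{\<sigma>. \<sigma> permutes {..<n}}" \<sigma> "\<lambda>\<sigma>. \<Prod>i<n. A i (\<sigma> i)"] \<sigma> assms
      by (simp add: tdet_def finite_permutations)
    ultimately show ?thesis
      using nuval_prod[of "{..<n}" "\<lambda>i. A i (\<sigma> i)"] by (simp add: w_def nu_at_most_def)
  next
    case False
    then obtain i0 where i0: "i0 < n" "A i0 (\<sigma> i0) = NInf" by auto
    have "(\<Sum>i<n. w i (\<sigma> i)) = w i0 (\<sigma> i0) + (\<Sum>i\<in>{..<n} - {i0}. w i (\<sigma> i))"
      using i0 by (simp add: sum.remove)
    also have "\<dots> \<le> L + (\<Sum>i\<in>{..<n} - {i0}. M)"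
      using i0 w_le permutes_lessThan_less[OF \<sigma>] by (intro add_mono sum_mono) (auto simp: w_def)
    also have "\<dots> = L + ((\<Sum>i<n. M) - M)"
      using i0 sum.remove[of "{..<n}" i0 "\<lambda>_. M"] by simp
    also have "\<dots> \<le> \<delta>" by (simp add: L_def min_def algebra_simps)
    finally show ?thesis .
  qed
  then show ?thesis using that[of w] by (simp add: w_def)
qed

lemma tdet_potentials:
  assumes "tdet n A = Tng \<delta>"
  obtains u v where "\<And>i j. i < n \<Longrightarrow> j < n \<Longrightarrow> nu_at_most (A i j) (u i + v j)"
    and "(\<Sum>i<n. u i) + (\<Sum>j<n. v j) = \<delta>"
proof -
  obtain \<pi> where \<pi>: "\<pi> permutes {..<n}" "\<And>i. i < n \<Longrightarrow> A i (\<pi> i) \<noteq> NInf"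
    "(\<Sum>i<n. nuval (A i (\<pi> i))) = \<delta>"
    using tdet_dominant_perm[OF assms] by blast
  obtain w where w: "\<And>i j. A i j \<noteq> NInf \<Longrightarrow> w i j = nuval (A i j)"
    "\<And>\<sigma>. \<sigma> permutes {..<n} \<Longrightarrow> (\<Sum>i<n. w i (\<sigma> i)) \<le> \<delta>"
    using tdet_finite_weights[OF assms] by blast
  have w\<pi>: "(\<Sum>i<n. w i (\<pi> i)) = \<delta>"
    using \<pi>(2,3) w(1) by simp
  obtain u v where uv: "\<And>i j. i < n \<Longrightarrow> j < n \<Longrightarrow> w i j \<le> u i + v j"
    "\<And>i. i < n \<Longrightarrow> w i (\<pi> i) = u i + v (\<pi> i)"
    using assignment_potentials[of \<pi> n w] \<pi>(1) w(2) w\<pi> by metis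
  show thesis
  proof
    show "nu_at_most (A i j) (u i + v j)" if "i < n" "j < n" for i j
      using uv(1)[OF that] w(1)[of i j] by (cases "A i j = NInf") (auto simp: nu_at_most_def)
    have "\<delta> = (\<Sum>i<n. u i) + (\<Sum>i<n. v (\<pi> i))"
      using w\<pi> uv(2) by (simp add: sum.distrib)
    then show "(\<Sum>i<n. u i) + (\<Sum>j<n. v j) = \<delta>"
      using sum.reindex_bij_betw[OF permutes_imp_bij[OF \<pi>(1)], of v] by simp
  qed
qed

lemma tdet_minor_nu_at_most:
  assumes A: "\<And>i j. i < Suc m \<Longrightarrow> j < Suc m \<Longrightarrow> nu_at_most (A i j) (u i + v j)"
    and rc: "r < Suc m" "c < Suc m"
  shows "nu_at_most (tdet m (minor A r c)) ((\<Sum>i<Suc m. u i) + (\<Sum>j<Suc m. v j) - u r - v c)"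
  unfolding tdet_minor[OF rc]
proof (rule nu_at_most_sum)
  fix \<sigma> assume "\<sigma> \<in> {\<sigma>. \<sigma> permutes {..<Suc m} \<and> \<sigma> r = c}"
  then have \<sigma>: "\<sigma> permutes {..<Suc m}" "\<sigma> r = c" by auto
  have "nu_at_most (\<Prod>i\<in>{..<Suc m} - {r}. A i (\<sigma> i)) (\<Sum>i\<in>{..<Suc m} - {r}. u i + v (\<sigma> i))"
    using A permutes_lessThan_less[OF \<sigma>(1)] by (intro nu_at_most_prod) auto
  moreover have "(\<Sum>i\<in>{..<Suc m} - {r}. u i + v (\<sigma> i)) = (\<Sum>i<Suc m. u i + v (\<sigma> i)) - (u r + v c)"
    using sum.remove[of "{..<Suc m}" r "\<lambda>i. u i + v (\<sigma> i)"] rc \<sigma>(2) by simp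
  moreover have "(\<Sum>i<Suc m. u i + v (\<sigma> i)) = (\<Sum>i<Suc m. u i) + (\<Sum>j<Suc m. v j)"
    using sum.reindex_bij_betw[OF permutes_imp_bij[OF \<sigma>(1)], of v] by (simp add: sum.distrib)
  ultimately show "nu_at_most (\<Prod>i\<in>{..<Suc m} - {r}. A i (\<sigma> i))
      ((\<Sum>i<Suc m. u i) + (\<Sum>j<Suc m. v j) - u r - v c)"
    by (simp add: algebra_simps)
qed

lemma tdet_minor_nu_at_least:
  assumes \<pi>: "\<pi> permutes {..<Suc m}" and fin: "\<And>i. i < Suc m \<Longrightarrow> A i (\<pi> i) \<noteq> NInf"
    and r: "r < Suc m"
  shows "nu_at_least (tdet m (minor A r (\<pi> r))) ((\<Sum>i<Suc m. nuval (A i (\<pi> i))) - nuval (A r (\<pi> r)))"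
proof -
  have "nu_at_least (\<Prod>i\<in>{..<Suc m} - {r}. A i (\<pi> i)) (\<Sum>i\<in>{..<Suc m} - {r}. nuval (A i (\<pi> i)))"
    using fin by (intro nu_at_least_prod) (auto simp: nu_at_least_def)
  moreover have "(\<Sum>i\<in>{..<Suc m} - {r}. nuval (A i (\<pi> i)))
      = (\<Sum>i<Suc m. nuval (A i (\<pi> i))) - nuval (A r (\<pi> r))"
    using sum.remove[of "{..<Suc m}" r "\<lambda>i. nuval (A i (\<pi> i))"] r by (simp add: algebra_simps)
  ultimately show ?thesis
    unfolding tdet_minor[OF r permutes_lessThan_less[OF \<pi> r]]
    using nu_at_least_sum[of "{\<sigma>. \<sigma> permutes {..<Suc m} \<and> \<sigma> r = \<pi> r}" \<pi>] \<pi>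
    by (simp add: finite_permutations)
qed

lemma tdet_adj_eq:
  "tdet (Suc m) (adj (Suc m) A) = (\<Sum>\<sigma>\<in>{\<sigma>. \<sigma> permutes {..<Suc m}}. \<Prod>j<Suc m. tdet m (minor A (\<sigma> j) j))"
  unfolding tdet_def adj_def by simp

lemma tdet_adj_nu_at_most:
  assumes det: "tdet (Suc m) A = Tng \<delta>"
  shows "nu_at_most (tdet (Suc m) (adj (Suc m) A)) (\<Sum>j<m. \<delta>)"
proof -
  let ?n = "Suc m"
  obtain u v where uv: "\<And>i j. i < ?n \<Longrightarrow> j < ?n \<Longrightarrow> nu_at_most (A i j) (u i + v j)"
    "(\<Sum>i<?n. u i) + (\<Sum>j<?n. v j) = \<delta>"
    using tdet_potentials[OF det] by blast
  show ?thesis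
    unfolding tdet_adj_eq
  proof (rule nu_at_most_sum)
    fix \<sigma> assume "\<sigma> \<in> {\<sigma>. \<sigma> permutes {..<?n}}"
    then have \<sigma>: "\<sigma> permutes {..<?n}" by simp
    have "nu_at_most (tdet m (minor A (\<sigma> j) j)) (\<delta> - u (\<sigma> j) - v j)" if "j < ?n" for j
      using tdet_minor_nu_at_most[of m A u v "\<sigma> j" j, OF uv(1)] permutes_lessThan_less[OF \<sigma> that] that
      unfolding uv(2) by blast
    then have "nu_at_most (\<Prod>j<?n. tdet m (minor A (\<sigma> j) j)) (\<Sum>j<?n. \<delta> - u (\<sigma> j) - v j)"
      by (intro nu_at_most_prod) simp
    moreover have "(\<Sum>j<?n. \<delta> - u (\<sigma> j) - v j) = (\<Sum>j<m. \<delta>)"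
      using uv(2) sum.reindex_bij_betw[OF permutes_imp_bij[OF \<sigma>], of u]
      by (simp add: sum_subtractf sum.distrib diff_diff_eq)
    ultimately show "nu_at_most (\<Prod>j<?n. tdet m (minor A (\<sigma> j) j)) (\<Sum>j<m. \<delta>)" by simp
  qed
qed

lemma tdet_adj_nu_at_least:
  assumes det: "tdet (Suc m) A = Tng \<delta>"
  shows "nu_at_least (tdet (Suc m) (adj (Suc m) A)) (\<Sum>j<m. \<delta>)"
proof -
  let ?n = "Suc m"
  obtain \<pi> where \<pi>: "\<pi> permutes {..<?n}" "\<And>i. i < ?n \<Longrightarrow> A i (\<pi> i) \<noteq> NInf"
    "(\<Sum>i<?n. nuval (A i (\<pi> i))) = \<delta>"
    using tdet_dominant_perm[OF det] by blast
  have \<pi>': "inv \<pi> permutes {..<?n}" using permutes_inv[OF \<pi>(1)] .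
  have "nu_at_least (tdet m (minor A (inv \<pi> j) j)) (\<delta> - nuval (A (inv \<pi> j) j))" if "j < ?n" for j
    using tdet_minor_nu_at_least[of \<pi> m A "inv \<pi> j", OF \<pi>(1,2) permutes_lessThan_less[OF \<pi>' that]] \<pi>(3)
    by (simp add: permutes_inverses(1)[OF \<pi>(1)])
  then have "nu_at_least (\<Prod>j<?n. tdet m (minor A (inv \<pi> j) j)) (\<Sum>j<?n. \<delta> - nuval (A (inv \<pi> j) j))"
    by (intro nu_at_least_prod) simp
  moreover have "(\<Sum>j<?n. \<delta> - nuval (A (inv \<pi> j) j)) = (\<Sum>j<m. \<delta>)"
    using sum.reindex_bij_betw[OF permutes_imp_bij[OF \<pi>'], of "\<lambda>j. nuval (A j (\<pi> j))"] \<pi>(3)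
    by (simp add: sum_subtractf permutes_inverses[OF \<pi>(1)])
  ultimately have "nu_at_least (\<Prod>j<?n. tdet m (minor A (inv \<pi> j) j)) (\<Sum>j<m. \<delta>)"
    by (simp only:)
  then show ?thesis
    unfolding tdet_adj_eq by (intro nu_at_least_sum[where i = "inv \<pi>"]) (simp_all add: finite_permutations \<pi>')
qed

lemma tdet_adj_gs_power: "tdet (Suc m) A = Tng \<delta> \<Longrightarrow> gs (tdet (Suc m) (adj (Suc m) A)) (Tng \<delta> ^ m)"
  by (simp add: Tng_power gs_Tng_if_nu_at_most_at_least tdet_adj_nu_at_most tdet_adj_nu_at_least)

lemma tdet_qinv_mult_gs_one:
  assumes "tangible (tdet n A)"
  shows "gs (tdet n (qinv n A) * tdet n A) 1"
proof (cases n)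
  case 0
  then show ?thesis by (simp add: gs_refl)
next
  case (Suc m)
  obtain \<delta> where det: "tdet n A = Tng \<delta>" using assms by (cases "tdet n A") auto
  have "tdet n (qinv n A) * tdet n A = Tng (- \<delta>) ^ n * tdet n (adj n A) * Tng \<delta>"
    unfolding qinv_def det by (simp add: tdet_smult)
  moreover have "gs (Tng (- \<delta>) ^ n * tdet n (adj n A) * Tng \<delta>) (Tng (- \<delta>) ^ n * Tng \<delta> ^ m * Tng \<delta>)"
    using tdet_adj_gs_power det Suc by (intro gs_mult gs_refl) simp
  moreover have "Tng (- \<delta>) ^ n * Tng \<delta> ^ m * Tng \<delta> = 1"
    using Suc by (simp add: Tng_power one_st_def sum_negf)
  ultimately show ?thesis by simp
qed

lemma tdet_conj_gs:
  assumes "tangible (tdet n A)"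
  shows "gs (tdet n (mmul n (mmul n (qinv n A) B) A)) (tdet n B)"
proof -
  let ?Q = "qinv n A"
  have "gs (tdet n (mmul n (mmul n ?Q B) A)) (tdet n (mmul n ?Q B) * tdet n A)"
    by (rule tdet_mmul_gs)
  moreover have "gs (tdet n (mmul n ?Q B) * tdet n A) ((tdet n ?Q * tdet n A) * tdet n B)"
    using gs_mult[OF tdet_mmul_gs gs_refl, of n ?Q B "tdet n A"] by (simp add: mult_ac)
  moreover have "gs ((tdet n ?Q * tdet n A) * tdet n B) (1 * tdet n B)"
    using tdet_qinv_mult_gs_one[OF assms] by (rule gs_mult[OF _ gs_refl])
  ultimately show ?thesis by (metis gs_trans mult_1)
qed

definition quasi_identity :: "nat \<Rightarrow> 'g::linordered_ab_group_add smat \<Rightarrow> bool" where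
  "quasi_identity n M \<longleftrightarrow> (\<forall>i<n. M i i = 1) \<and> (\<forall>i<n. \<forall>j<n. i \<noteq> j \<longrightarrow> ghost_or_zero (M i j))"

lemma quasi_identity_mmul_qinv:
  assumes "tangible (tdet n A)"
  shows "quasi_identity n (mmul n A (qinv n A))"
proof -
  obtain \<delta> where det: "tdet n A = Tng \<delta>" using assms by (cases "tdet n A") auto
  have entry: "mmul n A (qinv n A) k l = Tng (- \<delta>) * tdet n (A(l := A k))" if "l < n" for k l
  proof -
    obtain m where n: "n = Suc m" using \<open>l < n\<close> by (cases n) auto
    have "mmul n A (qinv n A) k l = Tng (- \<delta>) * (\<Sum>c<n. A k c * tdet m (minor A l c))"
      unfolding mmul_def qinv_def adj_def det using n
      by (simp add: sum_distrib_left mult.left_commute del: sum.lessThan_Suc)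
    then show ?thesis using tdet_expand_row_replaced[of l m A k] that n by simp
  qed
  show ?thesis
    unfolding quasi_identity_def
  proof (intro conjI allI impI)
    show "mmul n A (qinv n A) i i = 1" if "i < n" for i
      using entry[OF that] det by (simp add: one_st_def)
    show "ghost_or_zero (mmul n A (qinv n A) i j)" if "i < n" "j < n" "i \<noteq> j" for i j
      using entry[OF that(2)] tdet_repeated_row_ghost[of i n j "A(j := A i)"] that
      by (simp add: ghost_or_zero_mult_right)
  qed
qed

lemma ttrace_mmul_mmul: "ttrace n (mmul n (mmul n Q B) A) = (\<Sum>l<n. \<Sum>k<n. B l k * mmul n A Q k l)"
proof -
  have "ttrace n (mmul n (mmul n Q B) A) = (\<Sum>i<n. \<Sum>k<n. \<Sum>l<n. B l k * (A k i * Q i l))"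
    unfolding ttrace_def mmul_def by (simp add: sum_distrib_left sum_distrib_right mult_ac)
  also have "\<dots> = (\<Sum>i<n. \<Sum>l<n. \<Sum>k<n. B l k * (A k i * Q i l))"
    by (rule sum.cong[OF refl], rule sum.swap)
  also have "\<dots> = (\<Sum>l<n. \<Sum>i<n. \<Sum>k<n. B l k * (A k i * Q i l))"
    by (rule sum.swap)
  also have "\<dots> = (\<Sum>l<n. \<Sum>k<n. \<Sum>i<n. B l k * (A k i * Q i l))"
    by (rule sum.cong[OF refl], rule sum.swap)
  finally show ?thesis unfolding mmul_def by (simp add: sum_distrib_left)
qed

lemma ttrace_conj_gs:
  assumes Q: "quasi_identity n (mmul n A Q)"
  shows "gs (ttrace n (mmul n (mmul n Q B) A)) (ttrace n B)"
proof -
  let ?E = "\<lambda>l. \<Sum>k\<in>{..<n} - {l}. B l k * mmul n A Q k l"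
  have "ttrace n (mmul n (mmul n Q B) A) = (\<Sum>l<n. B l l + ?E l)"
    unfolding ttrace_mmul_mmul
    using Q by (intro sum.cong refl) (simp add: sum.remove quasi_identity_def)
  also have "\<dots> = ttrace n B + (\<Sum>l<n. ?E l)"
    unfolding ttrace_def by (simp add: sum.distrib)
  moreover have "ghost_or_zero (\<Sum>l<n. ?E l)"
    using Q by (intro ghost_or_zero_sum ghost_or_zero_mult_right) (auto simp: quasi_identity_def)
  ultimately show ?thesis by (simp add: gs_add_ghost_or_zero)
qed

theorem mainTheorem6:
  fixes n :: nat and A B B' :: "('g::linordered_ab_group_add) smat"
  assumes "tangible (tdet n A)"
    and "\<forall>i<n. \<forall>j<n. B' i j = mmul n (mmul n (qinv n A) B) A i j"
  shows "(gs (tdet n B') (tdet n B) \<and> (tangible (tdet n B') \<longrightarrow> tdet n B' = tdet n B))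
         \<and> gs (ttrace n B') (ttrace n B)"
proof -
  have "tdet n B' = tdet n (mmul n (mmul n (qinv n A) B) A)"
    using assms(2) by (intro tdet_cong) simp
  moreover have "ttrace n B' = ttrace n (mmul n (mmul n (qinv n A) B) A)"
    using assms(2) by (simp add: ttrace_def)
  ultimately show ?thesis
    using tdet_conj_gs[OF assms(1)] ttrace_conj_gs[OF quasi_identity_mmul_qinv[OF assms(1)]]
    by (auto dest: gs_tangible_eq)
qed

end
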